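(* Let $x, y \in \mathbb{R}^n$ with $y \ge 0$, and let $q \colon \mathbb{R}^n \times \mathbb{R}^n \to \mathbb{R}$ be defined by $q(x,y) := |x|^T y = \sum_{i=1}^n |x_i|\, y_i$. Then a vector $v \in \mathbb{R}^{2n}$ belongs to the limiting subdifferential $\partial q(x,y)$ if and only if $$v = \begin{pmatrix} y \circ s \\ |x| \end{pmatrix} \quad\text{for some } s \in \mathbb{R}^n \text{ with } s_i \in \begin{cases} \{1\}, & x_i > 0,\\ [-1,1], & x_i = 0,\\ \{-1\}, & x_i<0,\end{cases} \quad i=1,\dots,n.$$
   Context: $|x| := (|x_1|,\dots,|x_n|)^T$ and $\circ$ denotes the componentwise (Hadamard) product. For a nonempty closed set $Z$, the Fréchet normal cone at $z \in Z$ is the polar of the Bouligand tangent cone $T_Z(z)=\{d : \exists d^k\to d,\ t_k \searrow 0,\ z+t_kd^k \in Z\}$, and the limiting normal cone $N^{\lim}_Z(z)$ is the set of $v$ for which there exist $z^k \to z$ in $Z$ and $v^k \to v$ with $v^k$ in the Fréchet normal cone at $z^k$. For a lower semicontinuous function $h$, the limiting subdifferential is $\partial h(w) := \{ s : (s,-1) \in N^{\lim}_{\mathrm{epi}(h)}((w,h(w)))\}$. *)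

theory Defs
  imports "HOL-Analysis.Analysis"
begin

definition bouligand_tangent_cone :: "'a::real_inner set \<Rightarrow> 'a \<Rightarrow> 'a set" where
  "bouligand_tangent_cone Z z =
     {d. \<exists>dk tk. (dk \<longlonglongrightarrow> d) \<and> (tk \<longlonglongrightarrow> 0) \<and> (\<forall>k. tk k > 0) \<and> decseq tk
               \<and> (\<forall>k. z + tk k *\<^sub>R dk k \<in> Z)}"

definition frechet_normal_cone :: "'a::real_inner set \<Rightarrow> 'a \<Rightarrow> 'a set" where
  "frechet_normal_cone Z z = {v. \<forall>d \<in> bouligand_tangent_cone Z z. inner v d \<le> 0}"

definition limiting_normal_cone :: "'a::real_inner set \<Rightarrow> 'a \<Rightarrow> 'a set" where
  "limiting_normal_cone Z z =
     {v. \<exists>zk vk. (\<forall>k. zk k \<in> Z) \<and> (zk \<longlonglongrightarrow> z) \<and> (vk \<longlonglongrightarrow> v)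
               \<and> (\<forall>k. vk k \<in> frechet_normal_cone Z (zk k))}"

definition epigraph :: "('a \<Rightarrow> real) \<Rightarrow> ('a \<times> real) set" where
  "epigraph h = {(w, t). h w \<le> t}"

definition limiting_subdiff :: "('a::real_inner \<Rightarrow> real) \<Rightarrow> 'a \<Rightarrow> 'a set" where
  "limiting_subdiff h w = {s. (s, -1) \<in> limiting_normal_cone (epigraph h) (w, h w)}"

definition qfun :: "(real^'n) \<times> (real^'n) \<Rightarrow> real" where
  "qfun p = (\<Sum>i\<in>UNIV. \<bar>fst p $ i\<bar> * snd p $ i)"

end

theory Submission
  imports Defs
begin

(* If s is a subgradient of |.| at x, then g = (y o s, |x|) satisfies
     q(x', y') >= q(x, y) + <g, (x', y') - (x, y)> - |(x', y') - (x, y)|^2,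
   since |x'_i| y'_i differs from its linearisation by y_i (|x'_i| - s_i x'_i) >= 0 plus the
   cross term (|x'_i| - |x_i|)(y'_i - y_i).  Such a quadratic minorant makes (g, -1) a Frechet
   normal of the epigraph, hence a limiting one.
   Conversely, test a Frechet normal ((G, H), r) at an epigraph point ((a, b), t) against the
   coordinate segments: q is affine in y_i with slope |a_i|, 1-Lipschitz in x_i up to the factor
   |b_i|, and affine in x_i with slope sgn(a_i) b_i near a_i <> 0.  This gives
   |G_i| <= -r |b_i|, H_i = -r |a_i| and G_i = -r sgn(a_i) b_i if a_i <> 0; these relations
   pass to the limit r -> -1 (sgn being locally constant off 0) and describe the claimed set. *)

lemma abs_subgradient_iff:
  fixes a \<sigma> :: real
  shows "((0 < a \<longrightarrow> \<sigma> = 1) \<and> (a = 0 \<longrightarrow> \<sigma> \<in> {-1..1}) \<and> (a < 0 \<longrightarrow> \<sigma> = -1))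
    \<longleftrightarrow> \<sigma> * a = \<bar>a\<bar> \<and> \<bar>\<sigma>\<bar> \<le> 1"
proof (cases a "0::real" rule: linorder_cases)
  case less
  then show ?thesis
    using mult_right_cancel[of a \<sigma> "-1"] by auto
next
  case equal
  then show ?thesis
    by auto
next
  case greater
  then show ?thesis
    using mult_right_cancel[of a \<sigma> 1] by auto
qed

lemma abs_add_diff_mult_le:
  fixes a b \<delta> :: real
  shows "\<bar>(\<bar>a + \<delta>\<bar> - \<bar>a\<bar>) * b\<bar> \<le> \<bar>\<delta>\<bar> * \<bar>b\<bar>"
  unfolding abs_mult by (intro mult_right_mono) auto

lemma abs_mult_lower_bound:
  fixes a b \<alpha> \<beta> \<sigma> :: real
  assumes "0 \<le> b" and "\<sigma> * a = \<bar>a\<bar>" and "\<bar>\<sigma>\<bar> \<le> 1"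
  shows "\<bar>a\<bar> * b + b * \<sigma> * \<alpha> + \<bar>a\<bar> * \<beta> - (\<alpha>\<^sup>2 + \<beta>\<^sup>2) \<le> \<bar>a + \<alpha>\<bar> * (b + \<beta>)"
proof -
  have "\<sigma> * (a + \<alpha>) \<le> \<bar>\<sigma>\<bar> * \<bar>a + \<alpha>\<bar>"
    by (metis abs_ge_self abs_mult)
  also have "\<dots> \<le> \<bar>a + \<alpha>\<bar>"
    using assms(3) by (simp add: mult_left_le_one_le)
  finally have "\<bar>a\<bar> + \<sigma> * \<alpha> \<le> \<bar>a + \<alpha>\<bar>"
    using assms(2) by (simp add: distrib_left)
  then have "b * (\<bar>a\<bar> + \<sigma> * \<alpha>) \<le> b * \<bar>a + \<alpha>\<bar>"
    using assms(1) by (rule mult_left_mono)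
  moreover have "- (\<alpha>\<^sup>2 + \<beta>\<^sup>2) \<le> (\<bar>a + \<alpha>\<bar> - \<bar>a\<bar>) * \<beta>"
  proof -
    have "\<bar>(\<bar>a + \<alpha>\<bar> - \<bar>a\<bar>) * \<beta>\<bar> \<le> \<bar>\<alpha>\<bar> * \<bar>\<beta>\<bar>"
      by (rule abs_add_diff_mult_le)
    moreover have "2 * (\<bar>\<alpha>\<bar> * \<bar>\<beta>\<bar>) \<le> \<alpha>\<^sup>2 + \<beta>\<^sup>2"
      using sum_squares_bound[of "\<bar>\<alpha>\<bar>" "\<bar>\<beta>\<bar>"] by simp
    moreover have "0 \<le> \<bar>\<alpha>\<bar> * \<bar>\<beta>\<bar>"
      by simp
    ultimately show ?thesis
      by linarith
  qed
  ultimately show ?thesis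
    by (simp add: algebra_simps)
qed

lemma abs_add_small:
  fixes a \<delta> :: real
  assumes "\<bar>\<delta>\<bar> \<le> \<bar>a\<bar>"
  shows "\<bar>a + \<delta>\<bar> = \<bar>a\<bar> + sgn a * \<delta>"
  using assms by (cases a "0::real" rule: linorder_cases) auto

lemma abs_subgradient_scaled:
  fixes a b g :: real
  assumes "0 \<le> b" and "\<bar>g\<bar> \<le> b" and "a \<noteq> 0 \<Longrightarrow> g = sgn a * b"
  obtains \<sigma> where "\<sigma> * a = \<bar>a\<bar>" and "\<bar>\<sigma>\<bar> \<le> 1" and "g = b * \<sigma>"
proof (cases "a = 0")
  case False
  with assms(3) show ?thesis
    by (intro that[of "sgn a"]) (auto simp: abs_sgn mult.commute)
next
  case True
  show ?thesis
  proof (cases "b = 0")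
    case True
    with assms(2) \<open>a = 0\<close> show ?thesis
      by (intro that[of 0]) auto
  next
    case False
    with assms(1,2) \<open>a = 0\<close> show ?thesis
      by (intro that[of "g / b"]) auto
  qed
qed


lemma segment_in_bouligand_tangent_cone:
  assumes "0 < c" and "\<And>\<tau>. 0 < \<tau> \<Longrightarrow> \<tau> \<le> c \<Longrightarrow> z + \<tau> *\<^sub>R d \<in> Z"
  shows "d \<in> bouligand_tangent_cone Z z"
proof -
  define tk where "tk k = c / real (Suc k)" for k
  have "tk \<longlonglongrightarrow> 0"
    unfolding tk_def by (rule LIMSEQ_Suc) (rule lim_const_over_n)
  moreover have "decseq tk"
    unfolding decseq_def tk_def using \<open>0 < c\<close> by (auto intro!: divide_left_mono)
  moreover have "0 < tk k" and "tk k \<le> c" for k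
    using \<open>0 < c\<close> by (auto simp: tk_def field_simps)
  ultimately show ?thesis
    unfolding bouligand_tangent_cone_def using assms(2)
    by (intro CollectI exI[of _ "\<lambda>_. d"] exI[of _ tk]) auto
qed

lemma frechet_normal_epigraph_inner_le:
  fixes h :: "'a::real_inner \<Rightarrow> real"
  assumes "(g, r) \<in> frechet_normal_cone (epigraph h) (w, t)" and "h w \<le> t" and "0 < c"
    and "\<And>\<tau>. 0 < \<tau> \<Longrightarrow> \<tau> \<le> c \<Longrightarrow> h (w + \<tau> *\<^sub>R u) \<le> h w + \<tau> * \<rho>"
  shows "inner g u + r * \<rho> \<le> 0"
proof -
  have "(u, \<rho>) \<in> bouligand_tangent_cone (epigraph h) (w, t)"
    using assms(2,4) by (intro segment_in_bouligand_tangent_cone[OF \<open>0 < c\<close>])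
      (fastforce simp: epigraph_def)
  then show ?thesis
    using assms(1) unfolding frechet_normal_cone_def by (auto simp: mult.commute)
qed

lemma frechet_normal_epigraph_of_quadratic_minorant:
  fixes h :: "'a::real_inner \<Rightarrow> real"
  assumes "\<And>u. h w + inner g u - C * (norm u)\<^sup>2 \<le> h (w + u)"
  shows "(g, -1) \<in> frechet_normal_cone (epigraph h) (w, h w)"
  unfolding frechet_normal_cone_def
proof (intro CollectI ballI)
  fix d assume "d \<in> bouligand_tangent_cone (epigraph h) (w, h w)"
  then obtain dk tk where dk: "dk \<longlonglongrightarrow> d" and tk: "tk \<longlonglongrightarrow> 0" and tk_pos: "\<forall>k. 0 < tk k"
    and in_epi: "\<forall>k. (w, h w) + tk k *\<^sub>R dk k \<in> epigraph h"
    unfolding bouligand_tangent_cone_def by blast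
  have "inner g (fst (dk k)) - C * tk k * (norm (fst (dk k)))\<^sup>2 \<le> snd (dk k)" for k
  proof -
    have "h w + inner g (tk k *\<^sub>R fst (dk k)) - C * (norm (tk k *\<^sub>R fst (dk k)))\<^sup>2
        \<le> h w + tk k * snd (dk k)"
      using assms[of "tk k *\<^sub>R fst (dk k)"] in_epi[rule_format, of k]
      by (cases "dk k") (auto simp: epigraph_def)
    then have "tk k * (inner g (fst (dk k)) - C * tk k * (norm (fst (dk k)))\<^sup>2) \<le> tk k * snd (dk k)"
      using tk_pos by (simp add: power2_eq_square algebra_simps)
    then show ?thesis
      using tk_pos by simp
  qed
  moreover have "(\<lambda>k. inner g (fst (dk k)) - C * tk k * (norm (fst (dk k)))\<^sup>2)
      \<longlonglongrightarrow> inner g (fst d) - C * 0 * (norm (fst d))\<^sup>2"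
    by (intro tendsto_intros dk tk)
  ultimately have "inner g (fst d) \<le> snd d"
    using LIMSEQ_le[OF _ tendsto_snd[OF dk]] by simp
  then show "inner (g, -1) d \<le> 0"
    by (cases d) simp
qed

lemma frechet_normal_cone_subset_limiting_normal_cone:
  assumes "z \<in> Z"
  shows "frechet_normal_cone Z z \<subseteq> limiting_normal_cone Z z"
  unfolding limiting_normal_cone_def using assms by fastforce

lemma qfun_quadratic_minorant:
  fixes x y s :: "real^'n"
  assumes "\<forall>i. 0 \<le> y $ i" and "\<forall>i. s $ i * x $ i = \<bar>x $ i\<bar> \<and> \<bar>s $ i\<bar> \<le> 1"
  shows "qfun (x, y) + inner ((\<chi> i. y $ i * s $ i), (\<chi> i. \<bar>x $ i\<bar>)) u - (norm u)\<^sup>2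
    \<le> qfun ((x, y) + u)"
proof -
  obtain A B where u: "u = (A, B)"
    by fastforce
  have "(norm u)\<^sup>2 = inner A A + inner B B"
    by (simp add: u norm_Pair dot_square_norm)
  also have "\<dots> = (\<Sum>i\<in>UNIV. (A $ i)\<^sup>2 + (B $ i)\<^sup>2)"
    by (simp add: inner_vec_def sum.distrib power2_eq_square)
  moreover have "qfun (x, y) + inner ((\<chi> i. y $ i * s $ i), (\<chi> i. \<bar>x $ i\<bar>)) u
      = (\<Sum>i\<in>UNIV. \<bar>x $ i\<bar> * y $ i + y $ i * s $ i * A $ i + \<bar>x $ i\<bar> * B $ i)"
    by (simp add: u qfun_def inner_vec_def sum.distrib)
  moreover have "(\<Sum>i\<in>UNIV. \<bar>x $ i\<bar> * y $ i + y $ i * s $ i * A $ i + \<bar>x $ i\<bar> * B $ i)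
      - (\<Sum>i\<in>UNIV. (A $ i)\<^sup>2 + (B $ i)\<^sup>2) \<le> qfun ((x, y) + u)"
    unfolding u qfun_def sum_subtractf[symmetric]
    using assms by (auto intro!: sum_mono abs_mult_lower_bound)
  ultimately show ?thesis
    by linarith
qed

lemma frechet_normal_epigraph_qfun:
  fixes x y s :: "real^'n"
  assumes "\<forall>i. 0 \<le> y $ i" and "\<forall>i. s $ i * x $ i = \<bar>x $ i\<bar> \<and> \<bar>s $ i\<bar> \<le> 1"
  shows "(((\<chi> i. y $ i * s $ i), (\<chi> i. \<bar>x $ i\<bar>)), -1)
    \<in> frechet_normal_cone (epigraph qfun) ((x, y), qfun (x, y))"
  using qfun_quadratic_minorant[OF assms]
  by (intro frechet_normal_epigraph_of_quadratic_minorant[where C = 1]) simp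

lemma qfun_along_axis_fst:
  "qfun (a + \<tau> *\<^sub>R axis i \<alpha>, b) = qfun (a, b) + (\<bar>a $ i + \<tau> * \<alpha>\<bar> - \<bar>a $ i\<bar>) * b $ i"
proof -
  have "qfun (a + \<tau> *\<^sub>R axis i \<alpha>, b) - qfun (a, b)
      = (\<Sum>j\<in>UNIV. if j = i then (\<bar>a $ i + \<tau> * \<alpha>\<bar> - \<bar>a $ i\<bar>) * b $ i else 0)"
    unfolding qfun_def sum_subtractf[symmetric] by (intro sum.cong) (auto simp: axis_def algebra_simps)
  then show ?thesis
    by simp
qed

lemma qfun_along_axis_snd:
  "qfun (a, b + \<tau> *\<^sub>R axis i \<beta>) = qfun (a, b) + \<tau> * \<beta> * \<bar>a $ i\<bar>"
proof -
  have "qfun (a, b + \<tau> *\<^sub>R axis i \<beta>) - qfun (a, b)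
      = (\<Sum>j\<in>UNIV. if j = i then \<tau> * \<beta> * \<bar>a $ i\<bar> else 0)"
    unfolding qfun_def sum_subtractf[symmetric] by (intro sum.cong) (auto simp: axis_def algebra_simps)
  then show ?thesis
    by simp
qed

lemma frechet_normal_epigraph_qfun_coords:
  fixes a b G H :: "real^'n"
  assumes normal: "((G, H), r) \<in> frechet_normal_cone (epigraph qfun) ((a, b), t)"
    and "qfun (a, b) \<le> t"
  shows "\<bar>G $ i\<bar> \<le> - r * \<bar>b $ i\<bar>"
    and "H $ i = - r * \<bar>a $ i\<bar>"
    and "a $ i \<noteq> 0 \<Longrightarrow> G $ i = - r * sgn (a $ i) * b $ i"
proof -
  note segment_test = frechet_normal_epigraph_inner_le[OF normal \<open>qfun (a, b) \<le> t\<close>]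
  have along_fst: "G $ i * \<sigma> + r * \<rho> \<le> 0"
    if "0 < c" and "\<And>\<tau>. 0 < \<tau> \<Longrightarrow> \<tau> \<le> c \<Longrightarrow> (\<bar>a $ i + \<tau> * \<sigma>\<bar> - \<bar>a $ i\<bar>) * b $ i \<le> \<tau> * \<rho>"
    for \<sigma> \<rho> c
    using segment_test[of c "(axis i \<sigma>, 0)" \<rho>] that by (simp add: qfun_along_axis_fst inner_axis)
  have along_snd: "H $ i * \<beta> + r * (\<beta> * \<bar>a $ i\<bar>) \<le> 0" for \<beta>
    using segment_test[of 1 "(0, axis i \<beta>)" "\<beta> * \<bar>a $ i\<bar>"] by (simp add: qfun_along_axis_snd inner_axis)
  have "G $ i * \<sigma> + r * \<bar>b $ i\<bar> \<le> 0" if "\<bar>\<sigma>\<bar> = 1" for \<sigma>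
  proof (rule along_fst[of 1])
    fix \<tau> :: real assume "0 < \<tau>"
    have "(\<bar>a $ i + \<tau> * \<sigma>\<bar> - \<bar>a $ i\<bar>) * b $ i \<le> \<bar>(\<bar>a $ i + \<tau> * \<sigma>\<bar> - \<bar>a $ i\<bar>) * b $ i\<bar>"
      by (rule abs_ge_self)
    also have "\<dots> \<le> \<bar>\<tau> * \<sigma>\<bar> * \<bar>b $ i\<bar>"
      by (rule abs_add_diff_mult_le)
    also have "\<dots> = \<tau> * \<bar>b $ i\<bar>"
      using \<open>0 < \<tau>\<close> \<open>\<bar>\<sigma>\<bar> = 1\<close> by (simp add: abs_mult)
    finally show "(\<bar>a $ i + \<tau> * \<sigma>\<bar> - \<bar>a $ i\<bar>) * b $ i \<le> \<tau> * \<bar>b $ i\<bar>" .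
  qed simp
  from this[of 1] this[of "-1"] show "\<bar>G $ i\<bar> \<le> - r * \<bar>b $ i\<bar>"
    by simp
  from along_snd[of 1] along_snd[of "-1"] show "H $ i = - r * \<bar>a $ i\<bar>"
    by simp
  assume "a $ i \<noteq> 0"
  have "G $ i * \<sigma> + r * (\<sigma> * sgn (a $ i) * b $ i) \<le> 0" if "\<bar>\<sigma>\<bar> = 1" for \<sigma>
  proof (rule along_fst[of "\<bar>a $ i\<bar>"])
    fix \<tau> :: real assume "0 < \<tau>" "\<tau> \<le> \<bar>a $ i\<bar>"
    then have "\<bar>a $ i + \<tau> * \<sigma>\<bar> = \<bar>a $ i\<bar> + sgn (a $ i) * (\<tau> * \<sigma>)"
      using \<open>\<bar>\<sigma>\<bar> = 1\<close> by (intro abs_add_small) (simp add: abs_mult)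
    then show "(\<bar>a $ i + \<tau> * \<sigma>\<bar> - \<bar>a $ i\<bar>) * b $ i \<le> \<tau> * (\<sigma> * sgn (a $ i) * b $ i)"
      by (simp add: algebra_simps)
  qed (use \<open>a $ i \<noteq> 0\<close> in simp)
  from this[of 1] this[of "-1"] show "G $ i = - r * sgn (a $ i) * b $ i"
    by simp
qed

lemma limiting_subdiff_qfun_coords:
  fixes x y :: "real^'n"
  assumes "v \<in> limiting_subdiff qfun (x, y)"
  shows "\<bar>fst v $ i\<bar> \<le> \<bar>y $ i\<bar>"
    and "snd v $ i = \<bar>x $ i\<bar>"
    and "x $ i \<noteq> 0 \<Longrightarrow> fst v $ i = sgn (x $ i) * y $ i"
proof -
  obtain zk vk where in_epi: "\<forall>k. zk k \<in> epigraph qfun" and zk: "zk \<longlonglongrightarrow> ((x, y), qfun (x, y))"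
    and vk: "vk \<longlonglongrightarrow> (v, -1)" and normal: "\<forall>k. vk k \<in> frechet_normal_cone (epigraph qfun) (zk k)"
    using assms unfolding limiting_subdiff_def limiting_normal_cone_def by blast
  define a b g h r where "a k = fst (fst (zk k)) $ i" and "b k = snd (fst (zk k)) $ i"
    and "g k = fst (fst (vk k)) $ i" and "h k = snd (fst (vk k)) $ i" and "r k = snd (vk k)" for k
  have a_lim: "a \<longlonglongrightarrow> x $ i" and b_lim: "b \<longlonglongrightarrow> y $ i" and g_lim: "g \<longlonglongrightarrow> fst v $ i"
    and h_lim: "h \<longlonglongrightarrow> snd v $ i" and r_lim: "r \<longlonglongrightarrow> -1"
    unfolding a_def b_def g_def h_def r_def
    using tendsto_vec_nth[OF tendsto_fst[OF tendsto_fst[OF zk]]]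
      tendsto_vec_nth[OF tendsto_snd[OF tendsto_fst[OF zk]]]
      tendsto_vec_nth[OF tendsto_fst[OF tendsto_fst[OF vk]]]
      tendsto_vec_nth[OF tendsto_snd[OF tendsto_fst[OF vk]]]
      tendsto_snd[OF vk]
    by simp_all
  have coords: "\<bar>g k\<bar> \<le> - r k * \<bar>b k\<bar>" "h k = - r k * \<bar>a k\<bar>" "a k \<noteq> 0 \<Longrightarrow> g k = - r k * sgn (a k) * b k"
    for k
    using frechet_normal_epigraph_qfun_coords[of "fst (fst (vk k))" "snd (fst (vk k))" "snd (vk k)"
        "fst (fst (zk k))" "snd (fst (zk k))" "snd (zk k)" i]
      normal in_epi
    by (simp_all add: a_def b_def g_def h_def r_def epigraph_def case_prod_beta)
  show "\<bar>fst v $ i\<bar> \<le> \<bar>y $ i\<bar>"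
    using LIMSEQ_le[OF tendsto_rabs[OF g_lim] tendsto_mult[OF tendsto_minus[OF r_lim] tendsto_rabs[OF b_lim]]]
      coords(1)
    by simp
  have "h = (\<lambda>k. - r k * \<bar>a k\<bar>)"
    by (rule ext) (rule coords(2))
  moreover have "(\<lambda>k. - r k * \<bar>a k\<bar>) \<longlonglongrightarrow> - (-1) * \<bar>x $ i\<bar>"
    by (intro tendsto_intros r_lim a_lim)
  ultimately show "snd v $ i = \<bar>x $ i\<bar>"
    using LIMSEQ_unique[OF h_lim] by simp
  assume "x $ i \<noteq> 0"
  have "eventually (\<lambda>k. - r k * sgn (a k) * b k = g k) sequentially"
    using tendsto_imp_eventually_ne[OF a_lim \<open>x $ i \<noteq> 0\<close>] by (rule eventually_mono) (simp add: coords(3))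
  moreover have "(\<lambda>k. - r k * sgn (a k) * b k) \<longlonglongrightarrow> - (-1) * sgn (x $ i) * y $ i"
    using \<open>x $ i \<noteq> 0\<close> by (intro tendsto_intros r_lim a_lim b_lim)
  ultimately show "fst v $ i = sgn (x $ i) * y $ i"
    using LIMSEQ_unique[OF g_lim] Lim_transform_eventually by fastforce
qed

theorem mainTheorem1:
  fixes x y :: "real^'n" and v :: "(real^'n) \<times> (real^'n)"
  assumes "\<forall>i. y $ i \<ge> 0"
  shows "v \<in> limiting_subdiff qfun (x, y) \<longleftrightarrow>
    (\<exists>s :: real^'n.
       (\<forall>i. (x $ i > 0 \<longrightarrow> s $ i = 1) \<and> (x $ i = 0 \<longrightarrow> s $ i \<in> {-1..1})
            \<and> (x $ i < 0 \<longrightarrow> s $ i = -1))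
       \<and> v = ((\<chi> i. y $ i * s $ i), (\<chi> i. \<bar>x $ i\<bar>)))"
  unfolding abs_subgradient_iff
proof
  assume v: "v \<in> limiting_subdiff qfun (x, y)"
  have "\<exists>\<sigma>. \<sigma> * x $ i = \<bar>x $ i\<bar> \<and> \<bar>\<sigma>\<bar> \<le> 1 \<and> fst v $ i = y $ i * \<sigma>" for i
    using assms limiting_subdiff_qfun_coords[OF v, of i]
    by (metis abs_of_nonneg abs_subgradient_scaled)
  then obtain \<sigma> where "\<forall>i. \<sigma> i * x $ i = \<bar>x $ i\<bar> \<and> \<bar>\<sigma> i\<bar> \<le> 1 \<and> fst v $ i = y $ i * \<sigma> i"
    by metis
  then show "\<exists>s. (\<forall>i. s $ i * x $ i = \<bar>x $ i\<bar> \<and> \<bar>s $ i\<bar> \<le> 1)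
      \<and> v = ((\<chi> i. y $ i * s $ i), (\<chi> i. \<bar>x $ i\<bar>))"
    using limiting_subdiff_qfun_coords(2)[OF v]
    by (intro exI[of _ "\<chi> i. \<sigma> i"]) (simp add: prod_eq_iff vec_eq_iff)
next
  assume "\<exists>s. (\<forall>i. s $ i * x $ i = \<bar>x $ i\<bar> \<and> \<bar>s $ i\<bar> \<le> 1)
      \<and> v = ((\<chi> i. y $ i * s $ i), (\<chi> i. \<bar>x $ i\<bar>))"
  then obtain s where "\<forall>i. s $ i * x $ i = \<bar>x $ i\<bar> \<and> \<bar>s $ i\<bar> \<le> 1"
    and "v = ((\<chi> i. y $ i * s $ i), (\<chi> i. \<bar>x $ i\<bar>))"
    by blast
  then have "(v, -1) \<in> frechet_normal_cone (epigraph qfun) ((x, y), qfun (x, y))"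
    using frechet_normal_epigraph_qfun[OF assms] by simp
  then show "v \<in> limiting_subdiff qfun (x, y)"
    unfolding limiting_subdiff_def
    using frechet_normal_cone_subset_limiting_normal_cone[of "((x, y), qfun (x, y))" "epigraph qfun"]
    by (auto simp: epigraph_def)
qed

end
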